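(* Let $\alpha,\beta$ be compositions with $\beta\subseteq\alpha$, let $n=|\alpha/\beta|$, and let $M\in\mathrm{SET}(\alpha/\beta)$. Then $M$ is a minimal element of the poset $\mathrm{SET}(\alpha/\beta)$ if and only if, for every $i=1,2,\ldots,n-1$, one of the following holds in $M$: (1) $i$ and $i+1$ lie in consecutive cells of the same row of $\alpha/\beta$; (2) $i$ and $i+1$ lie in the same column of $\alpha/\beta$ (with $i+1$ above $i$ and no cell of $\alpha/\beta$ between them); (3) $i$ lies in a row of $\alpha/\beta$ strictly higher than the row of $i+1$.
   Context: A composition $\alpha=(\alpha_1,\ldots,\alpha_k)$ is a finite sequence of positive integers, $|\alpha|=\sum\alpha_i$, $\ell(\alpha)=k$. Its diagram has rows numbered from the bottom (row 1 is lowest), row $i$ consisting of the cells in columns $1,\ldots,\alpha_i$. For compositions with $\beta\subseteq\alpha$ (i.e. $\ell(\beta)\le\ell(\alpha)$ and $\beta_j\le\alpha_j$ for $j\le\ell(\beta)$), the skew diagram $\alpha/\beta$ consists of the cells in row $i$ and column $j$ with $\beta_i<j\le\alpha_i$ (where $\beta_i=0$ for $i>\ell(\beta)$); $|\alpha/\beta|=|\alpha|-|\beta|$. A standard immaculate tableau of shape $\alpha/\beta$ is a bijective filling of the cells of $\alpha/\beta$ with $1,\ldots,|\alpha/\beta|$ such that rows increase left to right and the entries in column 1 increase bottom to top; $\mathrm{SIT}(\alpha/\beta)$ is the set of these. $\mathrm{SET}(\alpha/\beta)\subseteq\mathrm{SIT}(\alpha/\beta)$ is the set of such fillings in which all rows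 increase left to right and all columns increase bottom to top (standard extended tableaux). For $1\le i\le n-1$ and $T\in\mathrm{SIT}(\alpha/\beta)$, the row-strict operator is $\pi_i(T)=T$ if $i+1$ is in a strictly higher row than $i$; $\pi_i(T)=s_i(T)$ (the tableau obtained by swapping the entries $i$ and $i+1$) if $i+1$ is in a strictly lower row than $i$; and $\pi_i(T)=0$ otherwise. This makes $\mathrm{SIT}(\alpha/\beta)$ a poset with $T\le T'$ iff $T'$ is obtained from $T$ by applying a sequence of operators $\pi_{i}$ (with all intermediate results nonzero); $\mathrm{SET}(\alpha/\beta)$ carries the induced order. An element $M$ is minimal in $\mathrm{SET}(\alpha/\beta)$ if there is no $T\in\mathrm{SET}(\alpha/\beta)$ with $T\neq M$ and $T<M$. *)

theory Defs
  imports Main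
begin

text \<open>Compositions are lists of positive naturals; entry k of the list (0-based)
  is the length of row k+1 (rows numbered from the bottom, starting at 1).
  Cells are pairs (row, column), both 1-based.\<close>

definition composition :: "nat list \<Rightarrow> bool" where
  "composition \<alpha> \<longleftrightarrow> (\<forall>x\<in>set \<alpha>. 0 < x)"

definition comp_size :: "nat list \<Rightarrow> nat" where
  "comp_size \<alpha> = sum_list \<alpha>"

definition part :: "nat list \<Rightarrow> nat \<Rightarrow> nat" where
  "part \<alpha> i = (if 1 \<le> i \<and> i \<le> length \<alpha> then \<alpha> ! (i - 1) else 0)"

definition comp_contained :: "nat list \<Rightarrow> nat list \<Rightarrow> bool" where
  "comp_contained \<beta> \<alpha> \<longleftrightarrow> length \<beta> \<le> length \<alpha> \<and>
     (\<forall>j. 1 \<le> j \<and> j \<le> length \<beta> \<longrightarrow> part \<beta> j \<le> part \<alpha> j)"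

definition skew_cells :: "nat list \<Rightarrow> nat list \<Rightarrow> (nat \<times> nat) set" where
  "skew_cells \<alpha> \<beta> = {(i, j). 1 \<le> i \<and> i \<le> length \<alpha> \<and> part \<beta> i < j \<and> j \<le> part \<alpha> i}"

definition skew_size :: "nat list \<Rightarrow> nat list \<Rightarrow> nat" where
  "skew_size \<alpha> \<beta> = comp_size \<alpha> - comp_size \<beta>"

text \<open>A filling is a function on cells; to make fillings canonical we require
  the value 0 outside the skew diagram.\<close>
type_synonym tableau = "nat \<times> nat \<Rightarrow> nat"

definition SIT :: "nat list \<Rightarrow> nat list \<Rightarrow> tableau set" where
  "SIT \<alpha> \<beta> = {T. bij_betw T (skew_cells \<alpha> \<beta>) {1..skew_size \<alpha> \<beta>}
      \<and> (\<forall>c. c \<notin> skew_cells \<alpha> \<beta> \<longrightarrow> T c = 0)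
      \<and> (\<forall>i j j'. (i, j) \<in> skew_cells \<alpha> \<beta> \<and> (i, j') \<in> skew_cells \<alpha> \<beta> \<and> j < j'
              \<longrightarrow> T (i, j) < T (i, j'))
      \<and> (\<forall>i i'. (i, 1) \<in> skew_cells \<alpha> \<beta> \<and> (i', 1) \<in> skew_cells \<alpha> \<beta> \<and> i < i'
              \<longrightarrow> T (i, 1) < T (i', 1))}"

definition SET :: "nat list \<Rightarrow> nat list \<Rightarrow> tableau set" where
  "SET \<alpha> \<beta> = {T \<in> SIT \<alpha> \<beta>.
      (\<forall>i i' j. (i, j) \<in> skew_cells \<alpha> \<beta> \<and> (i', j) \<in> skew_cells \<alpha> \<beta> \<and> i < i'
              \<longrightarrow> T (i, j) < T (i', j))}"

definition pos :: "nat list \<Rightarrow> nat list \<Rightarrow> tableau \<Rightarrow> nat \<Rightarrow> nat \<times> nat" where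
  "pos \<alpha> \<beta> T k = (THE c. c \<in> skew_cells \<alpha> \<beta> \<and> T c = k)"

definition swap_entries :: "nat \<Rightarrow> tableau \<Rightarrow> tableau" where
  "swap_entries i T = (\<lambda>c. if T c = i then i + 1 else if T c = i + 1 then i else T c)"

text \<open>Row-strict operator; None plays the role of 0.\<close>
definition pi_op :: "nat list \<Rightarrow> nat list \<Rightarrow> nat \<Rightarrow> tableau \<Rightarrow> tableau option" where
  "pi_op \<alpha> \<beta> i T =
     (if fst (pos \<alpha> \<beta> T i) < fst (pos \<alpha> \<beta> T (i + 1)) then Some T
      else if fst (pos \<alpha> \<beta> T (i + 1)) < fst (pos \<alpha> \<beta> T i) then Some (swap_entries i T)
      else None)"

definition pi_step :: "nat list \<Rightarrow> nat list \<Rightarrow> tableau \<Rightarrow> tableau \<Rightarrow> bool" where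
  "pi_step \<alpha> \<beta> T T' \<longleftrightarrow>
     (\<exists>i. 1 \<le> i \<and> i \<le> skew_size \<alpha> \<beta> - 1 \<and> pi_op \<alpha> \<beta> i T = Some T')"

definition sit_le :: "nat list \<Rightarrow> nat list \<Rightarrow> tableau \<Rightarrow> tableau \<Rightarrow> bool" where
  "sit_le \<alpha> \<beta> T T' \<longleftrightarrow> T \<in> SIT \<alpha> \<beta> \<and> (pi_step \<alpha> \<beta>)\<^sup>*\<^sup>* T T'"

definition minimal_SET :: "nat list \<Rightarrow> nat list \<Rightarrow> tableau \<Rightarrow> bool" where
  "minimal_SET \<alpha> \<beta> M \<longleftrightarrow> M \<in> SET \<alpha> \<beta> \<and>
     \<not> (\<exists>T\<in>SET \<alpha> \<beta>. T \<noteq> M \<and> sit_le \<alpha> \<beta> T M)"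

end

theory Submission
  imports Defs
begin

text \<open>Every operator \<pi>_i maps extended tableaux to extended tableaux, and a non-identity
  application swaps i and i+1 where i+1 sat in a strictly lower row. If such a swap ends in M,
  then in M the entry i+1 lies in a strictly higher row than i, so (1) and (3) fail at i and
  (2) must hold; but then before the swap i+1 sat directly below i in the same column,
  violating column strictness. Hence all steps into M are trivial and M is minimal.
  Conversely, if all three conditions fail at i, then i+1 lies in a strictly higher row
  than i and not in the same column (a cell between them in that column would need an
  entry strictly between i and i+1). Swapping i and i+1 then gives an extended tableau
  T \<noteq> M with \<pi>_i T = M.\<close>

lemma pos_in_skew_cells:
  assumes bij: "bij_betw T (skew_cells \<alpha> \<beta>) {1..skew_size \<alpha> \<beta>}"
    and k: "1 \<le> k" "k \<le> skew_size \<alpha> \<beta>"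
  shows "pos \<alpha> \<beta> T k \<in> skew_cells \<alpha> \<beta>" and "T (pos \<alpha> \<beta> T k) = k"
proof -
  have "k \<in> T ` skew_cells \<alpha> \<beta>"
    using bij k by (simp add: bij_betw_def)
  then obtain c where c: "c \<in> skew_cells \<alpha> \<beta>" "T c = k"
    by auto
  then have "\<exists>!c. c \<in> skew_cells \<alpha> \<beta> \<and> T c = k"
    using bij by (metis bij_betw_def inj_onD)
  then have "pos \<alpha> \<beta> T k \<in> skew_cells \<alpha> \<beta> \<and> T (pos \<alpha> \<beta> T k) = k"
    unfolding pos_def by (rule theI')
  then show "pos \<alpha> \<beta> T k \<in> skew_cells \<alpha> \<beta>" and "T (pos \<alpha> \<beta> T k) = k"
    by auto
qed

lemma pos_eqI:
  assumes "bij_betw T (skew_cells \<alpha> \<beta>) {1..skew_size \<alpha> \<beta>}"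
    and "c \<in> skew_cells \<alpha> \<beta>" "T c = k"
  shows "pos \<alpha> \<beta> T k = c"
  unfolding pos_def
  by (rule the_equality) (use assms in \<open>auto simp: bij_betw_def inj_on_def\<close>)

lemma SIT_bij: "T \<in> SIT \<alpha> \<beta> \<Longrightarrow> bij_betw T (skew_cells \<alpha> \<beta>) {1..skew_size \<alpha> \<beta>}"
  by (simp add: SIT_def)

lemma SET_bij: "T \<in> SET \<alpha> \<beta> \<Longrightarrow> bij_betw T (skew_cells \<alpha> \<beta>) {1..skew_size \<alpha> \<beta>}"
  by (simp add: SET_def SIT_def)

lemma swap_entries_swap_entries [simp]: "swap_entries i (swap_entries i T) = T"
  by (auto simp: swap_entries_def fun_eq_iff)

lemma swap_entries_less:
  assumes "T x < T y" "\<not> (T x = i \<and> T y = i + 1)"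
  shows "swap_entries i T x < swap_entries i T y"
  using assms by (auto simp: swap_entries_def)

lemma bij_betw_swap_entries:
  assumes bij: "bij_betw T A {1..n}" and i: "1 \<le> i" "i + 1 \<le> n"
  shows "bij_betw (swap_entries i T) A {1..n}"
proof -
  define s where "s = (\<lambda>v::nat. if v = i then i + 1 else if v = i + 1 then i else v)"
  have "bij_betw s {1..n} {1..n}"
    by (rule bij_betw_byWitness[where f' = s]) (use i in \<open>auto simp: s_def\<close>)
  moreover have "swap_entries i T = s \<circ> T"
    by (auto simp: swap_entries_def s_def fun_eq_iff)
  ultimately show ?thesis
    using bij_betw_trans[OF bij] by simp
qed

lemma pos_swap_entries:
  assumes bij: "bij_betw T (skew_cells \<alpha> \<beta>) {1..skew_size \<alpha> \<beta>}"
    and i: "1 \<le> i" "i + 1 \<le> skew_size \<alpha> \<beta>"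
  shows "pos \<alpha> \<beta> (swap_entries i T) i = pos \<alpha> \<beta> T (i + 1)"
    and "pos \<alpha> \<beta> (swap_entries i T) (i + 1) = pos \<alpha> \<beta> T i"
proof -
  have bij': "bij_betw (swap_entries i T) (skew_cells \<alpha> \<beta>) {1..skew_size \<alpha> \<beta>}"
    using bij_betw_swap_entries[OF bij i] .
  have "pos \<alpha> \<beta> T i \<in> skew_cells \<alpha> \<beta>" "T (pos \<alpha> \<beta> T i) = i"
    and "pos \<alpha> \<beta> T (i + 1) \<in> skew_cells \<alpha> \<beta>" "T (pos \<alpha> \<beta> T (i + 1)) = i + 1"
    using pos_in_skew_cells[OF bij, of i] pos_in_skew_cells[OF bij, of "i + 1"] i by auto
  moreover have "swap_entries i T (pos \<alpha> \<beta> T (i + 1)) = i"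
    and "swap_entries i T (pos \<alpha> \<beta> T i) = i + 1"
    using calculation by (simp_all add: swap_entries_def)
  ultimately show "pos \<alpha> \<beta> (swap_entries i T) i = pos \<alpha> \<beta> T (i + 1)"
    and "pos \<alpha> \<beta> (swap_entries i T) (i + 1) = pos \<alpha> \<beta> T i"
    using pos_eqI[OF bij'] by blast+
qed

lemma swap_entries_SET:
  assumes T: "T \<in> SET \<alpha> \<beta>" and i: "1 \<le> i" "i + 1 \<le> skew_size \<alpha> \<beta>"
    and a: "pos \<alpha> \<beta> T i = (r, c)" and b: "pos \<alpha> \<beta> T (i + 1) = (r', c')"
    and rows: "r \<noteq> r'" and cols: "c = c' \<Longrightarrow> r' < r"
  shows "swap_entries i T \<in> SET \<alpha> \<beta>"
proof -
  let ?S = "skew_cells \<alpha> \<beta>" and ?T' = "swap_entries i T"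
  have bij: "bij_betw T ?S {1..skew_size \<alpha> \<beta>}"
    using SET_bij[OF T] .
  have entry_i: "\<And>x. x \<in> ?S \<Longrightarrow> T x = i \<Longrightarrow> x = (r, c)"
    and entry_Suc_i: "\<And>x. x \<in> ?S \<Longrightarrow> T x = i + 1 \<Longrightarrow> x = (r', c')"
    using pos_eqI[OF bij] a b by metis+
  have "?T' (q, j) < ?T' (q, j')"
    if "(q, j) \<in> ?S" "(q, j') \<in> ?S" "j < j'" for q j j'
    using that T rows entry_i entry_Suc_i
    by (intro swap_entries_less) (auto simp: SET_def SIT_def)
  moreover have "?T' (q, j) < ?T' (q', j)"
    if "(q, j) \<in> ?S" "(q', j) \<in> ?S" "q < q'" for q q' j
    using that T cols entry_i entry_Suc_i
    by (intro swap_entries_less) (auto simp: SET_def)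
  moreover have "?T' x = 0" if "x \<notin> ?S" for x
  proof -
    have "T x = 0"
      using that T unfolding SET_def SIT_def by blast
    then show ?thesis using i by (simp add: swap_entries_def)
  qed
  ultimately show ?thesis
    using bij_betw_swap_entries[OF bij i] by (auto simp: SET_def SIT_def)
qed

lemma pi_op_SomeE:
  assumes "pi_op \<alpha> \<beta> i T = Some T'"
  obtains "T' = T"
  | "fst (pos \<alpha> \<beta> T (i + 1)) < fst (pos \<alpha> \<beta> T i)" and "T' = swap_entries i T"
  using assms by (auto simp: pi_op_def split: if_splits)

lemma pi_step_SET:
  assumes T: "T \<in> SET \<alpha> \<beta>" and step: "pi_step \<alpha> \<beta> T T'"
  shows "T' \<in> SET \<alpha> \<beta>"
proof -
  obtain i where i: "1 \<le> i" "i \<le> skew_size \<alpha> \<beta> - 1" and op: "pi_op \<alpha> \<beta> i T = Some T'"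
    using step by (auto simp: pi_step_def)
  from op show ?thesis
  proof (cases rule: pi_op_SomeE)
    case 1
    then show ?thesis using T by simp
  next
    case 2
    then show ?thesis
      using swap_entries_SET[OF T, of i] i by (cases "pos \<alpha> \<beta> T i", cases "pos \<alpha> \<beta> T (i + 1)") auto
  qed
qed

lemma pi_steps_SET:
  "(pi_step \<alpha> \<beta>)\<^sup>*\<^sup>* T T' \<Longrightarrow> T \<in> SET \<alpha> \<beta> \<Longrightarrow> T' \<in> SET \<alpha> \<beta>"
  by (induction rule: rtranclp_induct) (auto intro: pi_step_SET)

definition succ_adjacent_or_lower :: "nat list \<Rightarrow> nat list \<Rightarrow> tableau \<Rightarrow> nat \<Rightarrow> bool" where
  "succ_adjacent_or_lower \<alpha> \<beta> M i \<longleftrightarrow>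
     (let (r, c) = pos \<alpha> \<beta> M i; (r', c') = pos \<alpha> \<beta> M (i + 1) in
        (r' = r \<and> c' = c + 1)
      \<or> (c' = c \<and> r < r' \<and> (\<forall>r''. r < r'' \<and> r'' < r' \<longrightarrow> (r'', c) \<notin> skew_cells \<alpha> \<beta>))
      \<or> r' < r)"

lemma succ_adjacent_or_lower_iff:
  assumes "pos \<alpha> \<beta> M i = (r, c)" and "pos \<alpha> \<beta> M (i + 1) = (r', c')"
  shows "succ_adjacent_or_lower \<alpha> \<beta> M i \<longleftrightarrow>
     (r' = r \<and> c' = c + 1)
   \<or> (c' = c \<and> r < r' \<and> (\<forall>r''. r < r'' \<and> r'' < r' \<longrightarrow> (r'', c) \<notin> skew_cells \<alpha> \<beta>))
   \<or> r' < r"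
  using assms by (simp add: succ_adjacent_or_lower_def)

lemma SIT_succ_same_row:
  assumes T: "T \<in> SIT \<alpha> \<beta>" and i: "1 \<le> i" "i + 1 \<le> skew_size \<alpha> \<beta>"
    and a: "pos \<alpha> \<beta> T i = (r, c)" and b: "pos \<alpha> \<beta> T (i + 1) = (r, c')"
  shows "c' = c + 1"
proof -
  have cells: "(r, c) \<in> skew_cells \<alpha> \<beta>" "(r, c') \<in> skew_cells \<alpha> \<beta>"
    and entries: "T (r, c) = i" "T (r, c') = i + 1"
    using pos_in_skew_cells[OF SIT_bij[OF T], of i] pos_in_skew_cells[OF SIT_bij[OF T], of "i + 1"]
      i a b by auto
  have rows: "\<And>j j'. (r, j) \<in> skew_cells \<alpha> \<beta> \<Longrightarrow> (r, j') \<in> skew_cells \<alpha> \<beta> \<Longrightarrow> j < j'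
      \<Longrightarrow> T (r, j) < T (r, j')"
    using T by (simp add: SIT_def)
  have "c \<noteq> c'" and "\<not> c' < c"
    using rows[of c' c] cells entries by auto
  moreover have False if "c + 1 < c'"
  proof -
    have "(r, c + 1) \<in> skew_cells \<alpha> \<beta>"
      using cells that by (auto simp: skew_cells_def)
    then show False
      using rows[of c "c + 1"] rows[of "c + 1" c'] cells entries that by simp
  qed
  ultimately show ?thesis by arith
qed

lemma SET_succ_same_column:
  assumes T: "T \<in> SET \<alpha> \<beta>" and i: "1 \<le> i" "i + 1 \<le> skew_size \<alpha> \<beta>"
    and a: "pos \<alpha> \<beta> T i = (r, c)" and b: "pos \<alpha> \<beta> T (i + 1) = (r', c)"
    and between: "r < r''" "r'' < r'"
  shows "(r'', c) \<notin> skew_cells \<alpha> \<beta>"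
proof
  assume cell: "(r'', c) \<in> skew_cells \<alpha> \<beta>"
  have "(r, c) \<in> skew_cells \<alpha> \<beta>" "(r', c) \<in> skew_cells \<alpha> \<beta>"
    and entries: "T (r, c) = i" "T (r', c) = i + 1"
    using pos_in_skew_cells[OF SET_bij[OF T], of i] pos_in_skew_cells[OF SET_bij[OF T], of "i + 1"]
      i a b by auto
  moreover have "\<And>q q'. (q, c) \<in> skew_cells \<alpha> \<beta> \<Longrightarrow> (q', c) \<in> skew_cells \<alpha> \<beta> \<Longrightarrow> q < q'
      \<Longrightarrow> T (q, c) < T (q', c)"
    using T by (simp add: SET_def)
  ultimately have "T (r, c) < T (r'', c)" "T (r'', c) < T (r', c)"
    using cell between by blast+
  then show False using entries by simp
qed

lemma pi_step_into_succ_adjacent_or_lower: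
  assumes T: "T \<in> SET \<alpha> \<beta>" and step: "pi_step \<alpha> \<beta> T M"
    and M: "\<forall>i. 1 \<le> i \<and> i \<le> skew_size \<alpha> \<beta> - 1 \<longrightarrow> succ_adjacent_or_lower \<alpha> \<beta> M i"
  shows "T = M"
proof -
  obtain i where i: "1 \<le> i" "i \<le> skew_size \<alpha> \<beta> - 1" and op: "pi_op \<alpha> \<beta> i T = Some M"
    using step by (auto simp: pi_step_def)
  from op show ?thesis
  proof (cases rule: pi_op_SomeE)
    case 1
    then show ?thesis by simp
  next
    case 2
    obtain r c r' c' where a: "pos \<alpha> \<beta> T i = (r, c)" and b: "pos \<alpha> \<beta> T (i + 1) = (r', c')"
      by fastforce
    have i': "i + 1 \<le> skew_size \<alpha> \<beta>" using i by linarith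
    have bij: "bij_betw T (skew_cells \<alpha> \<beta>) {1..skew_size \<alpha> \<beta>}"
      using SET_bij[OF T] .
    have "pos \<alpha> \<beta> M i = (r', c')" "pos \<alpha> \<beta> M (i + 1) = (r, c)"
      using pos_swap_entries[OF bij i(1) i'] a b 2 by auto
    moreover have "succ_adjacent_or_lower \<alpha> \<beta> M i"
      using M i by blast
    ultimately have "c' = c" "r' < r"
      using 2 a b by (auto simp: succ_adjacent_or_lower_iff)
    moreover have "(r, c) \<in> skew_cells \<alpha> \<beta>" "(r', c') \<in> skew_cells \<alpha> \<beta>"
      and entries: "T (r, c) = i" "T (r', c') = i + 1"
      using pos_in_skew_cells[OF bij, of i] pos_in_skew_cells[OF bij, of "i + 1"] i' i a b by auto
    moreover have "\<And>q q' j. (q, j) \<in> skew_cells \<alpha> \<beta> \<Longrightarrow> (q', j) \<in> skew_cells \<alpha> \<beta> \<Longrightarrow> q < q'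
        \<Longrightarrow> T (q, j) < T (q', j)"
      using T by (simp add: SET_def)
    ultimately have "T (r', c') < T (r, c)"
      by metis
    with entries show ?thesis by simp
  qed
qed

lemma minimal_SET_if_succ_adjacent_or_lower:
  assumes M: "M \<in> SET \<alpha> \<beta>"
    and succ: "\<forall>i. 1 \<le> i \<and> i \<le> skew_size \<alpha> \<beta> - 1 \<longrightarrow> succ_adjacent_or_lower \<alpha> \<beta> M i"
  shows "minimal_SET \<alpha> \<beta> M"
proof -
  have "T = M'" if "(pi_step \<alpha> \<beta>)\<^sup>*\<^sup>* T M'" "T \<in> SET \<alpha> \<beta>"
    "\<forall>i. 1 \<le> i \<and> i \<le> skew_size \<alpha> \<beta> - 1 \<longrightarrow> succ_adjacent_or_lower \<alpha> \<beta> M' i" for T M'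
    using that
  proof (induction rule: rtranclp_induct)
    case base
    then show ?case by simp
  next
    case (step y z)
    then have "y = z"
      using pi_step_into_succ_adjacent_or_lower pi_steps_SET by blast
    with step show ?case by simp
  qed
  then show ?thesis
    using M succ unfolding minimal_SET_def sit_le_def by blast
qed

lemma succ_adjacent_or_lower_if_minimal_SET:
  assumes min: "minimal_SET \<alpha> \<beta> M" and i: "1 \<le> i" "i \<le> skew_size \<alpha> \<beta> - 1"
  shows "succ_adjacent_or_lower \<alpha> \<beta> M i"
proof (rule ccontr)
  assume fails: "\<not> succ_adjacent_or_lower \<alpha> \<beta> M i"
  have M: "M \<in> SET \<alpha> \<beta>" and MI: "M \<in> SIT \<alpha> \<beta>"
    using min by (auto simp: minimal_SET_def SET_def)
  have i': "i + 1 \<le> skew_size \<alpha> \<beta>" using i by linarith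
  obtain r c r' c' where a: "pos \<alpha> \<beta> M i = (r, c)" and b: "pos \<alpha> \<beta> M (i + 1) = (r', c')"
    by fastforce
  have "r \<noteq> r'"
    using fails SIT_succ_same_row[OF MI i(1) i' a] b
    by (auto simp: succ_adjacent_or_lower_iff[OF a b])
  then have higher: "r < r'"
    using fails by (auto simp: succ_adjacent_or_lower_iff[OF a b])
  have "c \<noteq> c'"
    using fails higher SET_succ_same_column[OF M i(1) i' a] b
    by (auto simp: succ_adjacent_or_lower_iff[OF a b])
  define T where "T = swap_entries i M"
  have T: "T \<in> SET \<alpha> \<beta>"
    unfolding T_def using swap_entries_SET[OF M i(1) i' a b] \<open>r \<noteq> r'\<close> \<open>c \<noteq> c'\<close> by blast
  have "pos \<alpha> \<beta> T i = (r', c')" "pos \<alpha> \<beta> T (i + 1) = (r, c)"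
    using pos_swap_entries[OF SIT_bij[OF MI] i(1) i'] a b by (auto simp: T_def)
  then have "pi_op \<alpha> \<beta> i T = Some M"
    using higher by (simp add: pi_op_def T_def)
  then have "pi_step \<alpha> \<beta> T M"
    using i by (auto simp: pi_step_def)
  moreover have "T \<noteq> M"
  proof -
    have "M (r, c) = i"
      using pos_in_skew_cells(2)[OF SIT_bij[OF MI] i(1)] i' a by simp
    then have "T (r, c) = i + 1"
      by (simp add: T_def swap_entries_def)
    with \<open>M (r, c) = i\<close> show ?thesis by auto
  qed
  ultimately show False
    using min T unfolding minimal_SET_def sit_le_def SET_def by blast
qed

theorem lemma3p1:
  fixes \<alpha> \<beta> :: "nat list" and M :: tableau
  assumes "composition \<alpha>" and "composition \<beta>" and "comp_contained \<beta> \<alpha>"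
    and "M \<in> SET \<alpha> \<beta>"
  shows "minimal_SET \<alpha> \<beta> M \<longleftrightarrow>
    (\<forall>i. 1 \<le> i \<and> i \<le> skew_size \<alpha> \<beta> - 1 \<longrightarrow>
       (let (r, c) = pos \<alpha> \<beta> M i; (r', c') = pos \<alpha> \<beta> M (i + 1) in
          (r' = r \<and> c' = c + 1)
        \<or> (c' = c \<and> r < r' \<and> (\<forall>r''. r < r'' \<and> r'' < r' \<longrightarrow> (r'', c) \<notin> skew_cells \<alpha> \<beta>))
        \<or> r' < r))"
  using succ_adjacent_or_lower_if_minimal_SET minimal_SET_if_succ_adjacent_or_lower[OF assms(4)]
  unfolding succ_adjacent_or_lower_def by blast

end
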